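(* Let $N\ge 1$ be an integer and let $\lambda,\mu,B_1,B_2>0$ with $B_1<B_2$ and $\lambda\mu<B_1+NB_2$. Put $\beta=\frac{B_1}{NB_2}$ (so that $\sqrt{\beta N}=\sqrt{B_1/B_2}$). For $\alpha\in[0,1]$ satisfying the stability constraints $\alpha\lambda<B_1/\mu$ and $(1-\alpha)\lambda/N<B_2/\mu$, define the average system delay of the non-aggregated system $$D(\alpha)=\alpha\,\frac{1}{B_1/\mu-\alpha\lambda}+(1-\alpha)\,\frac{1}{B_2/\mu-(1-\alpha)\lambda/N}.$$ Then the minimum of $D$ over all feasible $\alpha$ is $$D_{\min,\mathrm{non\text{-}agg}}=\begin{cases}\dfrac{\mu N}{B_2N-\lambda\mu}, & \text{if } \dfrac{B_2N}{\lambda\mu}\bigl(1-\sqrt{\beta N}\bigr)\ge 1,\\[3mm] \dfrac{\lambda\mu(1+N)-B_2N\bigl(1-\sqrt{\beta N}\bigr)^2}{\lambda\,[B_2N(\beta+1)-\lambda\mu]}, & \text{otherwise.}\end{cases}$$ In the first case the minimizer is $\alpha_{opt}=0$; in the second case it is $$\alpha_{opt}=\frac{\lambda\mu\sqrt{\beta}/(B_2N)+\sqrt{\beta}\,(\sqrt{\beta N}-1)}{\lambda\mu(\sqrt{\beta}+\sqrt{N})/(B_2N)}.$$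
   Context: Non-aggregated hybrid WiFi–VLC system: one WiFi access point of downlink capacity $B_1$ and $N$ VLC access points each of downlink capacity $B_2$. Requests arrive as a Poisson process of rate $\lambda$; request sizes are i.i.d. exponential with mean $\mu$. Each request is sent, independently at random, entirely to the WiFi queue with probability $\alpha$, or otherwise entirely to one of the $N$ VLC queues chosen uniformly at random. Thus the WiFi queue is an M/M/1 queue with arrival rate $\alpha\lambda$ and service rate $B_1/\mu$, and each VLC queue is an M/M/1 queue with arrival rate $(1-\alpha)\lambda/N$ and service rate $B_2/\mu$; a request's system delay is its stationary sojourn time (arrival until fully served) in the queue it joins, so the average system delay is $D(\alpha)=\alpha D_{WiFi}+(1-\alpha)D_{VLC}$ with $D_{WiFi},D_{VLC}$ the M/M/1 mean sojourn times, which gives the formula in the claim. *)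

theory Defs
  imports Complex_Main
begin

text \<open>Average system delay of the non-aggregated hybrid WiFi-VLC system
  (M/M/1 mean sojourn times weighted by the routing probabilities).\<close>
definition avg_delay :: "real \<Rightarrow> real \<Rightarrow> real \<Rightarrow> real \<Rightarrow> nat \<Rightarrow> real \<Rightarrow> real" where
  "avg_delay lam mu B1 B2 N a =
     a * (1 / (B1 / mu - a * lam)) + (1 - a) * (1 / (B2 / mu - (1 - a) * lam / real N))"

definition feasible :: "real \<Rightarrow> real \<Rightarrow> real \<Rightarrow> real \<Rightarrow> nat \<Rightarrow> real set" where
  "feasible lam mu B1 B2 N =
     {a. 0 \<le> a \<and> a \<le> 1 \<and> a * lam < B1 / mu \<and> (1 - a) * lam / real N < B2 / mu}"

end

theory Submission
  imports Defs
begin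

text \<open>Measure capacities in requests per unit time, \<open>x = B1/\<mu>\<close> and \<open>y = B2/\<mu>\<close>. A feasible
  \<open>\<alpha>\<close> leaves slacks \<open>s = x - \<alpha>\<lambda>\<close> and \<open>t = y - (1 - \<alpha>)\<lambda>/N\<close> in the two queues, related by
  \<open>s + N t = x + N y - \<lambda>\<close>, and the delay becomes \<open>(x/s + N y/t - 1 - N)/\<lambda>\<close>. The convex
  function \<open>x/s + N y/t\<close> lies above its tangent planes. At \<open>(s, t) = (\<surd>x k, \<surd>y k)\<close> with
  \<open>k = (x + N y - \<lambda>)/(\<surd>x + N \<surd>y)\<close> the tangent plane is constant on the line
  \<open>s + N t = x + N y - \<lambda>\<close>, so this point is the global minimiser; it has \<open>\<alpha> \<ge> 0\<close> exactly
  when \<open>\<lambda> > N (y - \<surd>(x y))\<close>. Otherwise the tangent plane at \<open>\<alpha> = 0\<close> is nondecreasing in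
  \<open>\<alpha>\<close>, so \<open>\<alpha> = 0\<close> is optimal.\<close>

lemma inverse_above_tangent:
  fixes c s s0 :: real
  assumes "0 \<le> c" "0 < s" "0 < s0"
  shows "c * (2 / s0 - s / s0\<^sup>2) \<le> c / s"
proof -
  have "1 / s - (2 / s0 - s / s0\<^sup>2) = (s - s0)\<^sup>2 / (s * s0\<^sup>2)"
    using assms by (simp add: field_simps power2_eq_square)
  also have "\<dots> \<ge> 0" using assms by simp
  finally have "2 / s0 - s / s0\<^sup>2 \<le> 1 / s" by simp
  from mult_left_mono[OF this assms(1)] show ?thesis by simp
qed

lemma avg_delay_scale:
  "avg_delay lam mu B1 B2 N a = avg_delay lam 1 (B1 / mu) (B2 / mu) N a"
  by (simp add: avg_delay_def)

lemma feasible_scale: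
  "feasible lam mu B1 B2 N = feasible lam 1 (B1 / mu) (B2 / mu) N"
  by (simp add: feasible_def)

lemma avg_delay_slack_form:
  fixes lam x y a :: real and N :: nat
  assumes "a \<in> feasible lam 1 x y N" "0 < lam" "N \<ge> 1"
  shows "avg_delay lam 1 x y N a
         = (x / (x - a * lam) + N * y / (y - (1 - a) * lam / N) - 1 - N) / lam"
proof -
  define s t where "s = x - a * lam" and "t = y - (1 - a) * lam / N"
  have "s \<noteq> 0" "t \<noteq> 0" using assms(1) unfolding feasible_def s_def t_def by auto
  have "a = (x - s) / lam" and "1 - a = N * (y - t) / lam"
    using assms(2,3) unfolding s_def t_def by (simp_all add: field_simps)
  then have "avg_delay lam 1 x y N a = (x - s) / lam * (1 / s) + N * (y - t) / lam * (1 / t)"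
    unfolding avg_delay_def s_def t_def by (metis div_by_1)
  also have "\<dots> = (x / s + N * y / t - 1 - N) / lam"
    using \<open>s \<noteq> 0\<close> \<open>t \<noteq> 0\<close> assms(2) by (simp add: field_simps)
  finally show ?thesis unfolding s_def t_def .
qed

lemma avg_delay_min_at_zero:
  fixes lam x y a :: real and N :: nat
  assumes "N \<ge> 1" "0 < lam" "0 < x" "0 < y" "lam \<le> N * (y - sqrt x * sqrt y)"
  shows "0 \<in> feasible lam 1 x y N"
    and "avg_delay lam 1 x y N 0 = N / (N * y - lam)"
    and "a \<in> feasible lam 1 x y N \<Longrightarrow> N / (N * y - lam) \<le> avg_delay lam 1 x y N a"
proof -
  define t0 where "t0 = y - lam / N"
  have N0: "real N > 0" using assms(1) by simp
  have t0_ge: "sqrt x * sqrt y \<le> t0"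
    using assms(5) N0 unfolding t0_def by (simp add: field_simps)
  moreover have "0 < sqrt x * sqrt y" using assms(3,4) by simp
  ultimately have t0_pos: "0 < t0" by linarith
  have D0: "N / (N * y - lam) = (1 + N * y / t0 - 1 - N) / lam"
    using N0 t0_pos assms(2) unfolding t0_def by (simp add: field_simps)
  show "0 \<in> feasible lam 1 x y N"
    using assms(3) t0_pos N0 unfolding feasible_def t0_def by (simp add: field_simps)
  then show "avg_delay lam 1 x y N 0 = N / (N * y - lam)"
    using avg_delay_slack_form[OF _ assms(2,1)] assms(2,3) unfolding D0 t0_def by simp
  assume feasible_a: "a \<in> feasible lam 1 x y N"
  then have a: "0 \<le> a" "0 < x - a * lam" "0 < y - (1 - a) * lam / N"
    unfolding feasible_def by (auto simp: algebra_simps)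
  define s t where "s = x - a * lam" and "t = y - (1 - a) * lam / N"
  have "x * y = (sqrt x * sqrt y)\<^sup>2" using assms(3,4) by (simp add: power_mult_distrib)
  also have "\<dots> \<le> t0\<^sup>2" using power_mono[OF t0_ge, of 2] assms(3,4) by simp
  finally have "0 \<le> a * lam * (1 / x - y / t0\<^sup>2)"
    using a(1) assms(2,3) t0_pos by (simp add: field_simps mult_left_mono)
  also have "a * lam * (1 / x - y / t0\<^sup>2)
      = x * (2 / x - s / x\<^sup>2) + N * y * (2 / t0 - t / t0\<^sup>2) - (1 + N * y / t0)"
  proof -
    have "t = t0 + a * lam / N" unfolding t_def t0_def using N0 by (simp add: field_simps)
    then show ?thesis unfolding s_def using N0 assms(3) t0_pos
      by (simp add: field_simps power2_eq_square)
  qed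
  finally have "1 + N * y / t0 \<le> x * (2 / x - s / x\<^sup>2) + N * y * (2 / t0 - t / t0\<^sup>2)"
    by simp
  also have "\<dots> \<le> x / s + N * y / t"
    using inverse_above_tangent[of x s x] inverse_above_tangent[of "N * y" t t0]
      a assms(3,4) t0_pos unfolding s_def t_def by (simp add: add_mono)
  finally show "N / (N * y - lam) \<le> avg_delay lam 1 x y N a"
    unfolding D0 avg_delay_slack_form[OF feasible_a assms(2,1)] s_def t_def
    using assms(2) by (simp add: divide_right_mono)
qed

lemma avg_delay_min_interior:
  fixes lam x y a :: real and N :: nat
  assumes "N \<ge> 1" "0 < lam" "0 < x" "x < y"
    and "N * (y - sqrt x * sqrt y) < lam" "lam < x + N * y"
  defines "k \<equiv> (x + N * y - lam) / (sqrt x + N * sqrt y)"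
  shows "(x - sqrt x * k) / lam \<in> feasible lam 1 x y N"
    and "avg_delay lam 1 x y N ((x - sqrt x * k) / lam)
         = ((sqrt x + N * sqrt y) / k - 1 - N) / lam"
    and "a \<in> feasible lam 1 x y N
         \<Longrightarrow> ((sqrt x + N * sqrt y) / k - 1 - N) / lam \<le> avg_delay lam 1 x y N a"
proof -
  define p q where "p = sqrt x" and "q = sqrt y"
  define a0 where "a0 = (x - p * k) / lam"
  have N0: "real N > 0" using assms(1) by simp
  have p0: "0 < p" and q0: "0 < q" and pq: "p < q"
    using assms(3,4) unfolding p_def q_def by auto
  have x: "x = p\<^sup>2" and y: "y = q\<^sup>2" using assms(3,4) unfolding p_def q_def by auto
  have below: "N * (y - p * q) < lam" using assms(5) unfolding p_def q_def .
  have w0: "0 < p + N * q" using p0 q0 N0 by (simp add: add_pos_pos)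
  have C: "x + N * y - lam = (p + N * q) * k" using w0 unfolding k_def p_def q_def by simp
  have k0: "0 < k" using w0 assms(6) unfolding k_def p_def q_def by simp
  have s0: "x - a0 * lam = p * k" unfolding a0_def using assms(2) by simp
  have t0: "y - (1 - a0) * lam / N = q * k"
  proof -
    have "y - (1 - a0) * lam / N = (x + N * y - lam - (x - a0 * lam)) / N"
      using N0 by (simp add: field_simps)
    also have "\<dots> = q * k" unfolding C s0 using N0 by (simp add: algebra_simps)
    finally show ?thesis .
  qed
  have "p * k \<le> x"
  proof -
    have "x + N * y - lam \<le> p * (p + N * q)"
      using below unfolding x y by (simp add: power2_eq_square algebra_simps)
    then show ?thesis
      using C w0 p0 by (simp add: x power2_eq_square mult.commute mult_left_le_imp_le)
  qed
  moreover have "x - lam \<le> p * k"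
  proof -
    have "x < p * q" using pq p0 unfolding x by (simp add: power2_eq_square)
    then have "0 \<le> N * q * (p * q - x + lam)" using assms(2) N0 q0 by simp
    also have "\<dots> = p * (x + N * y - lam) - (x - lam) * (p + N * q)"
      unfolding y by (simp add: power2_eq_square algebra_simps)
    finally have "(x - lam) * (p + N * q) \<le> p * (x + N * y - lam)" by simp
    then show ?thesis unfolding C using w0 by (simp add: mult.commute mult_left_le_imp_le)
  qed
  ultimately have feasible_a0: "a0 \<in> feasible lam 1 x y N"
    using s0 t0 p0 q0 k0 assms(2) unfolding feasible_def a0_def by (simp add: field_simps)
  then show "(x - sqrt x * k) / lam \<in> feasible lam 1 x y N" unfolding a0_def p_def .
  have "x / (p * k) + N * y / (q * k) = (p + N * q) / k"
    unfolding x y using p0 q0 k0 by (simp add: field_simps power2_eq_square)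
  then show "avg_delay lam 1 x y N ((x - sqrt x * k) / lam)
             = ((sqrt x + N * sqrt y) / k - 1 - N) / lam"
    using avg_delay_slack_form[OF feasible_a0 assms(2,1)] s0 t0 unfolding a0_def p_def q_def
    by simp
  assume feasible_a: "a \<in> feasible lam 1 x y N"
  then have a: "0 < x - a * lam" "0 < y - (1 - a) * lam / N"
    unfolding feasible_def by (auto simp: algebra_simps)
  define s t where "s = x - a * lam" and "t = y - (1 - a) * lam / N"
  have "s + N * t = (p + N * q) * k"
    unfolding s_def t_def C[symmetric] using N0 by (simp add: field_simps)
  then have "(p + N * q) / k = 2 * (p + N * q) / k - (s + N * t) / k\<^sup>2"
    using k0 by (simp add: field_simps power2_eq_square)
  also have "\<dots> = x * (2 / (p * k) - s / (p * k)\<^sup>2)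
                    + N * y * (2 / (q * k) - t / (q * k)\<^sup>2)"
    unfolding x y using p0 q0 k0 by (simp add: field_simps power2_eq_square)
  also have "\<dots> \<le> x / s + N * y / t"
    using inverse_above_tangent[of x s "p * k"] inverse_above_tangent[of "N * y" t "q * k"]
      a assms(3,4) p0 q0 k0 N0 unfolding s_def t_def by (simp add: add_mono)
  finally show "((sqrt x + N * sqrt y) / k - 1 - N) / lam \<le> avg_delay lam 1 x y N a"
    unfolding avg_delay_slack_form[OF feasible_a assms(2,1)] s_def t_def p_def q_def
    using assms(2) by (simp add: divide_right_mono)
qed

lemma threshold_closed_form:
  fixes lam mu B1 B2 :: real and N :: nat
  assumes "N \<ge> 1" "0 < lam" "0 < mu" "0 < B1" "0 < B2"
  defines "x \<equiv> B1 / mu" and "y \<equiv> B2 / mu"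
  shows "B2 * N / (lam * mu) * (1 - sqrt (B1 / (N * B2) * N)) = N * (y - sqrt x * sqrt y) / lam"
proof -
  define p q where "p = sqrt x" and "q = sqrt y"
  have p0: "0 < p" and q0: "0 < q" using assms(3-5) unfolding p_def q_def x_def y_def by auto
  have B1: "B1 = mu * p\<^sup>2" and B2: "B2 = mu * q\<^sup>2"
    using assms(3-5) unfolding p_def q_def x_def y_def by auto
  have "sqrt (B1 / (N * B2) * N) = p / q"
    using assms(1,3) p0 q0 unfolding B1 B2 by (simp add: real_sqrt_divide real_sqrt_mult)
  then show ?thesis
    unfolding p_def[symmetric] q_def[symmetric] using assms(2,3) p0 q0
    unfolding x_def y_def B2 by (simp add: field_simps power2_eq_square)
qed

lemma interior_min_delay_closed_form:
  fixes lam mu B1 B2 \<beta> x y k :: real and N :: nat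
  assumes "N \<ge> 1" "0 < lam" "0 < mu" "0 < B1" "0 < B2" "lam * mu < B1 + N * B2"
  defines "\<beta> \<equiv> B1 / (N * B2)" and "x \<equiv> B1 / mu" and "y \<equiv> B2 / mu"
  defines "k \<equiv> (x + N * y - lam) / (sqrt x + N * sqrt y)"
  shows "(lam * mu * (1 + N) - B2 * N * (1 - sqrt (\<beta> * N))\<^sup>2)
           / (lam * (B2 * N * (\<beta> + 1) - lam * mu))
         = ((sqrt x + N * sqrt y) / k - 1 - N) / lam"
proof -
  define p q where "p = sqrt x" and "q = sqrt y"
  have N0: "real N > 0" using assms(1) by simp
  have p0: "0 < p" and q0: "0 < q" using assms(3-5) unfolding p_def q_def x_def y_def by auto
  have B1: "B1 = mu * p\<^sup>2" and B2: "B2 = mu * q\<^sup>2"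
    using assms(3-5) unfolding p_def q_def x_def y_def by auto
  have x: "x = p\<^sup>2" and y: "y = q\<^sup>2" using assms(3-5) unfolding p_def q_def x_def y_def by auto
  have sqrt_\<beta>N: "sqrt (\<beta> * N) = p / q"
    using N0 assms(3) p0 q0 unfolding \<beta>_def B1 B2 by (simp add: real_sqrt_divide real_sqrt_mult)
  define C where "C = x + N * y - lam"
  have C0: "0 < C" using assms(3,6) unfolding C_def x_def y_def by (simp add: field_simps)
  have num: "lam * mu * (1 + N) - B2 * N * (1 - sqrt (\<beta> * N))\<^sup>2
             = mu * ((p + N * q)\<^sup>2 - (1 + N) * C)"
    unfolding sqrt_\<beta>N B2 C_def x y using q0
    by (simp add: field_simps power2_eq_square)
  have den: "lam * (B2 * N * (\<beta> + 1) - lam * mu) = mu * (lam * C)"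
    unfolding \<beta>_def C_def x_def y_def using N0 assms(3,5) by (simp add: field_simps)
  have ratio: "(sqrt x + N * sqrt y) / k = (p + N * q)\<^sup>2 / C"
    unfolding k_def C_def[symmetric] p_def[symmetric] q_def[symmetric] by (simp add: power2_eq_square)
  show ?thesis unfolding num den ratio using assms(2,3) C0 by (simp add: field_simps)
qed

lemma interior_minimizer_closed_form:
  fixes lam mu B1 B2 \<beta> x y k :: real and N :: nat
  assumes "N \<ge> 1" "0 < lam" "0 < mu" "0 < B1" "0 < B2"
  defines "\<beta> \<equiv> B1 / (N * B2)" and "x \<equiv> B1 / mu" and "y \<equiv> B2 / mu"
  defines "k \<equiv> (x + N * y - lam) / (sqrt x + N * sqrt y)"
  shows "(lam * mu * sqrt \<beta> / (B2 * N) + sqrt \<beta> * (sqrt (\<beta> * N) - 1))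
           / (lam * mu * (sqrt \<beta> + sqrt N) / (B2 * N))
         = (x - sqrt x * k) / lam"
proof -
  define p q r where "p = sqrt x" and "q = sqrt y" and "r = sqrt N"
  have p0: "0 < p" and q0: "0 < q" and r0: "0 < r"
    using assms(1,3-5) unfolding p_def q_def r_def x_def y_def by auto
  have B1: "B1 = mu * p\<^sup>2" and B2: "B2 = mu * q\<^sup>2" and N: "real N = r\<^sup>2"
    using assms(3-5) unfolding p_def q_def r_def x_def y_def by auto
  have sqrt_\<beta>N: "sqrt (\<beta> * N) = p / q" and sqrt_\<beta>: "sqrt \<beta> = p / (r * q)"
    using assms(3) p0 q0 r0 unfolding \<beta>_def B1 B2 N
    by (simp_all add: real_sqrt_divide real_sqrt_mult)
  define M where "M = r * q * (q\<^sup>2 * r\<^sup>2)"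
  have M0: "0 < M" unfolding M_def using q0 r0 by simp
  have w0: "0 < p + r\<^sup>2 * q" using p0 q0 r0 by (simp add: add_pos_pos)
  have "lam * mu * sqrt \<beta> / (B2 * N) + sqrt \<beta> * (sqrt (\<beta> * N) - 1)
        = p * (lam + r\<^sup>2 * q * (p - q)) / M"
    unfolding sqrt_\<beta>N sqrt_\<beta> unfolding B2 N M_def using assms(3) q0 r0
    by (simp add: field_simps power2_eq_square)
  moreover have "lam * mu * (sqrt \<beta> + sqrt N) / (B2 * N) = lam * (p + r\<^sup>2 * q) / M"
    unfolding sqrt_\<beta> B2 N M_def r_def[symmetric] using assms(3) q0 r0
    by (simp add: field_simps power2_eq_square)
  moreover have "(x - sqrt x * k) / lam = p * (lam + r\<^sup>2 * q * (p - q)) / (lam * (p + r\<^sup>2 * q))"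
  proof -
    have "x = p\<^sup>2" "y = q\<^sup>2" using assms(3-5) unfolding p_def q_def x_def y_def by auto
    then show ?thesis unfolding k_def p_def[symmetric] q_def[symmetric] N using w0 assms(2)
      by (simp add: field_simps power2_eq_square)
  qed
  ultimately show ?thesis using M0 by simp
qed

theorem theorem1:
  fixes N :: nat and lam mu B1 B2 :: real
  assumes "N \<ge> 1" and "lam > 0" and "mu > 0" and "B1 > 0" and "B2 > 0"
    and "B1 < B2" and "lam * mu < B1 + real N * B2"
  defines "\<beta> \<equiv> B1 / (real N * B2)"
  defines "Dmin \<equiv> (if B2 * real N / (lam * mu) * (1 - sqrt (\<beta> * real N)) \<ge> 1
                    then mu * real N / (B2 * real N - lam * mu)
                    else (lam * mu * (1 + real N) - B2 * real N * (1 - sqrt (\<beta> * real N))\<^sup>2)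
                         / (lam * (B2 * real N * (\<beta> + 1) - lam * mu)))"
  defines "a_opt \<equiv> (if B2 * real N / (lam * mu) * (1 - sqrt (\<beta> * real N)) \<ge> 1
                    then 0
                    else (lam * mu * sqrt \<beta> / (B2 * real N) + sqrt \<beta> * (sqrt (\<beta> * real N) - 1))
                         / (lam * mu * (sqrt \<beta> + sqrt (real N)) / (B2 * real N)))"
  shows "(\<forall>a \<in> feasible lam mu B1 B2 N. Dmin \<le> avg_delay lam mu B1 B2 N a)
         \<and> a_opt \<in> feasible lam mu B1 B2 N \<and> avg_delay lam mu B1 B2 N a_opt = Dmin"
proof -
  define x y where "x = B1 / mu" and "y = B2 / mu"
  have x0: "0 < x" and xy: "x < y" and stable: "lam < x + N * y"
    using assms(3-7) unfolding x_def y_def by (simp_all add: field_simps divide_strict_right_mono)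
  have scaled: "feasible lam mu B1 B2 N = feasible lam 1 x y N"
    "avg_delay lam mu B1 B2 N = avg_delay lam 1 x y N"
    unfolding x_def y_def by (rule feasible_scale, rule ext, rule avg_delay_scale)
  have threshold: "B2 * N / (lam * mu) * (1 - sqrt (\<beta> * N)) \<ge> 1
                   \<longleftrightarrow> lam \<le> N * (y - sqrt x * sqrt y)"
    using threshold_closed_form[OF assms(1-5)] assms(2) unfolding \<beta>_def x_def y_def
    by (simp add: le_divide_eq)
  show ?thesis
  proof (cases "lam \<le> N * (y - sqrt x * sqrt y)")
    case True
    have "Dmin = N / (N * y - lam)" and "a_opt = 0"
      unfolding Dmin_def a_opt_def using True threshold assms(3) unfolding y_def
      by (auto simp: field_simps)
    then show ?thesis
      using avg_delay_min_at_zero[OF assms(1,2) x0 _ True] x0 xy unfolding scaled by auto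
  next
    case False
    define k where "k = (x + N * y - lam) / (sqrt x + N * sqrt y)"
    have "Dmin = ((sqrt x + N * sqrt y) / k - 1 - N) / lam"
      and "a_opt = (x - sqrt x * k) / lam"
      unfolding Dmin_def a_opt_def using False threshold
        interior_min_delay_closed_form[OF assms(1-5,7)] interior_minimizer_closed_form[OF assms(1-5)]
      unfolding \<beta>_def k_def x_def y_def by simp_all
    then show ?thesis
      using avg_delay_min_interior[OF assms(1,2) x0 xy _ stable] False unfolding scaled k_def by auto
  qed
qed

end
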